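(* Let $q$ be a prime power and $\ell$ an odd prime with $\gcd(\ell,q)=1$, and let $m$ be a positive integer. Assume $f=\mathrm{ord}_\ell(q)$ is odd. Let $g$ be a fixed generator of the cyclic group $\mathbb Z_{\ell^m}^*$. For $1\le r\le m$ let $\lambda(r)=\mathrm{ord}_{\ell^r}(q)$ and $\delta(r)=\phi(\ell^r)/\lambda(r)$, where $\phi$ is Euler's function. Then the sets $C_0=\{0\}$, $$C_{\ell^{m-r}g^k}=\{\ell^{m-r}g^k,\ell^{m-r}g^kq,\dots,\ell^{m-r}g^kq^{\lambda(r)-1}\},\qquad C_{-\ell^{m-r}g^k}=\{-\ell^{m-r}g^k,-\ell^{m-r}g^kq,\dots,-\ell^{m-r}g^kq^{\lambda(r)-1}\},$$ for $1\le r\le m$ and $0\le k\le\frac{\delta(r)}{2}-1$ (elements taken modulo $\ell^m$), are pairwise distinct and constitute all the distinct $q$-cyclotomic cosets modulo $\ell^m$.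
   Context: The $q$-cyclotomic coset of an integer $t$ modulo $\ell^m$ is $C_t=\{tq^i \bmod \ell^m: i\ge0\}$. *)

theory Defs
  imports "HOL-Number_Theory.Number_Theory"
begin

definition cyc_coset :: "nat \<Rightarrow> nat \<Rightarrow> int \<Rightarrow> int set" where
  "cyc_coset q n t = {(t * int q ^ i) mod int n | i. True}"

definition lam :: "nat \<Rightarrow> nat \<Rightarrow> nat \<Rightarrow> nat" where
  "lam q l r = ord (l ^ r) q"

definition dlt :: "nat \<Rightarrow> nat \<Rightarrow> nat \<Rightarrow> nat" where
  "dlt q l r = totient (l ^ r) div lam q l r"

definition listed_set :: "nat \<Rightarrow> nat \<Rightarrow> nat \<Rightarrow> nat \<Rightarrow> int \<Rightarrow> nat \<Rightarrow> nat \<Rightarrow> int set" where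
  "listed_set q l m g s r k =
     {(s * int (l ^ (m - r)) * int g ^ k * int q ^ j) mod int (l ^ m) | j. j < lam q l r}"

end

theory Submission
  imports Defs
begin

(* Modulo l^r the units form a cyclic group generated by g, in which the powers of q form a
   subgroup of index \<delta>(r).  Since ord_l(q) is odd, -1 = g^(\<phi>(l^r)/2) is not a power of q;
   this forces \<delta>(r) to be even with \<phi>(l^r)/2 \<equiv> \<delta>(r)/2 (mod \<delta>(r)), so every unit modulo l^r
   is \<plusminus>g^k q^j with a unique sign and a unique 0 \<le> k < \<delta>(r)/2.  A nonzero residue modulo l^m
   is l^(m-r) w with r determined by the residue and w a unit modulo l^r, and its q-cyclotomic
   coset is determined by r together with the class of w modulo the powers of q. *)

lemma cyc_coset_mod [simp]: "cyc_coset q N (t mod int N) = cyc_coset q N t"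
  by (simp add: cyc_coset_def mod_mult_left_eq)

lemma mod_mem_cyc_coset: "t mod int N \<in> cyc_coset q N t"
  unfolding cyc_coset_def by (rule CollectI, rule exI[of _ 0]) simp

lemma cyc_coset_eq_zero_iff: "cyc_coset q N t = {0} \<longleftrightarrow> int N dvd t"
proof
  assume "cyc_coset q N t = {0}"
  with mod_mem_cyc_coset[of t N q] show "int N dvd t" by auto
next
  assume "int N dvd t"
  then show "cyc_coset q N t = {0}" by (auto simp: cyc_coset_def)
qed

lemma cyc_coset_subset:
  assumes "[t' = t * int q ^ j] (mod int N)"
  shows "cyc_coset q N t' \<subseteq> cyc_coset q N t"
proof
  fix y assume "y \<in> cyc_coset q N t'"
  then obtain i where y: "y = (t' * int q ^ i) mod int N" by (auto simp: cyc_coset_def)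
  have "[t' * int q ^ i = t * int q ^ (j + i)] (mod int N)"
    using cong_scalar_right[OF assms] by (simp add: power_add mult.assoc)
  then show "y \<in> cyc_coset q N t" by (auto simp: y cyc_coset_def cong_def)
qed

lemma cong_q_power_sym:
  assumes "coprime N q" "[t' = t * int q ^ j] (mod int N)"
  shows "[t = t' * int q ^ ((ord N q - 1) * j)] (mod int N)"
proof -
  have ord_pos: "ord N q > 0" using assms(1) by simp
  have "[int q ^ ord N q = 1] (mod int N)"
    using ord[of q N] by (metis cong_int_iff of_nat_1 of_nat_power)
  then have "[(int q ^ ord N q) ^ j = 1] (mod int N)"
    using cong_pow by fastforce
  then have "[t * (int q ^ ord N q) ^ j = t] (mod int N)"
    using cong_scalar_left by fastforce
  moreover have "t * (int q ^ ord N q) ^ j = t * int q ^ j * int q ^ ((ord N q - 1) * j)"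
  proof -
    have "ord N q * j = j + (ord N q - 1) * j" using ord_pos by (cases "ord N q") auto
    then show ?thesis by (simp add: power_mult[symmetric] power_add mult.assoc)
  qed
  moreover have "[t' * int q ^ ((ord N q - 1) * j) = t * int q ^ j * int q ^ ((ord N q - 1) * j)] (mod int N)"
    using cong_scalar_right[OF assms(2)] .
  ultimately show ?thesis by (metis cong_sym cong_trans)
qed

lemma cyc_coset_eq_iff:
  assumes "coprime N q"
  shows "cyc_coset q N t = cyc_coset q N t' \<longleftrightarrow> (\<exists>j. [t' = t * int q ^ j] (mod int N))"
proof
  assume "cyc_coset q N t = cyc_coset q N t'"
  with mod_mem_cyc_coset[of t' N q] obtain j where "t' mod int N = (t * int q ^ j) mod int N"
    by (auto simp: cyc_coset_def)
  then show "\<exists>j. [t' = t * int q ^ j] (mod int N)" by (auto simp: cong_def)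
next
  assume "\<exists>j. [t' = t * int q ^ j] (mod int N)"
  then obtain j where j: "[t' = t * int q ^ j] (mod int N)" ..
  show "cyc_coset q N t = cyc_coset q N t'"
    using cyc_coset_subset[OF j] cyc_coset_subset[OF cong_q_power_sym[OF assms j]] by blast
qed

lemma listed_set_eq_cyc_coset:
  assumes "coprime l q" "r \<le> m"
  shows "listed_set q l m g s r k = cyc_coset q (l ^ m) (s * int (l ^ (m - r)) * int g ^ k)"
proof
  show "listed_set q l m g s r k \<subseteq> cyc_coset q (l ^ m) (s * int (l ^ (m - r)) * int g ^ k)"
    by (auto simp: listed_set_def cyc_coset_def)
next
  show "cyc_coset q (l ^ m) (s * int (l ^ (m - r)) * int g ^ k) \<subseteq> listed_set q l m g s r k"
  proof
    fix y assume "y \<in> cyc_coset q (l ^ m) (s * int (l ^ (m - r)) * int g ^ k)"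
    then obtain i where y: "y = (s * int (l ^ (m - r)) * int g ^ k * int q ^ i) mod int (l ^ m)"
      by (auto simp: cyc_coset_def)
    have cq: "coprime (l ^ r) q" using assms(1) by simp
    have "[q ^ i = q ^ (i mod lam q l r)] (mod l ^ r)"
      using order_divides_expdiff[OF cq] by (simp add: lam_def cong_def)
    then have "[s * int g ^ k * int q ^ i = s * int g ^ k * int q ^ (i mod lam q l r)] (mod int (l ^ r))"
      by (metis cong_int_iff cong_scalar_left of_nat_power)
    then have "[int (l ^ (m - r)) * (s * int g ^ k * int q ^ i)
        = int (l ^ (m - r)) * (s * int g ^ k * int q ^ (i mod lam q l r))] (mod int (l ^ (m - r)) * int (l ^ r))"
      by (rule cong_cmult_leftI)
    moreover have "int (l ^ (m - r)) * int (l ^ r) = int (l ^ m)"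
      using assms(2) by (simp add: power_add[symmetric])
    moreover have "s * int (l ^ (m - r)) * int g ^ k * int q ^ x = int (l ^ (m - r)) * (s * int g ^ k * int q ^ x)"
      for x by (simp add: ac_simps)
    ultimately have "y = (s * int (l ^ (m - r)) * int g ^ k * int q ^ (i mod lam q l r)) mod int (l ^ m)"
      by (simp only: y cong_def)
    moreover have "i mod lam q l r < lam q l r" using cq by (simp add: lam_def)
    ultimately show "y \<in> listed_set q l m g s r k" by (auto simp: listed_set_def)
  qed
qed

lemma cong_mult_solvable_iff:
  fixes e x n :: nat
  shows "(\<exists>j. [e * j = x] (mod n)) \<longleftrightarrow> gcd e n dvd x"
proof
  assume "\<exists>j. [e * j = x] (mod n)"
  then obtain j where "[e * j = x] (mod n)" ..
  then have "[e * j = x] (mod gcd e n)" using cong_dvd_modulus_nat by blast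
  then show "gcd e n dvd x" using cong_dvd_iff by (metis dvd_mult2 gcd_dvd1)
qed (rule cong_solve_dvd_nat)

(* With g^h = -1, the unit (-1)^a g^k is g^(a h + k); these two lemmas are the exponent form
   of the decomposition of units as \<plusminus>g^k modulo the powers of q. *)
lemma half_shift_residue_exists:
  fixes D h x :: nat
  assumes "even D" "0 < D" "[h = D div 2] (mod D)"
  shows "\<exists>a k. a \<le> 1 \<and> k < D div 2 \<and> [a * h + k = x] (mod D)"
proof -
  define a where "a = (if x mod D < D div 2 then 0 else 1::nat)"
  define k where "k = x mod D - a * (D div 2)"
  have "a * (D div 2) + k = x mod D" "k < D div 2"
    using assms(1,2) mod_less_divisor[OF assms(2), of x] by (auto simp: a_def k_def elim!: evenE)
  moreover have "[a * h + k = a * (D div 2) + k] (mod D)"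
    using assms(3) by (intro cong_add cong_scalar_left) auto
  ultimately have "[a * h + k = x] (mod D)" by (simp add: cong_def)
  moreover have "a \<le> 1" by (simp add: a_def)
  ultimately show ?thesis using \<open>k < D div 2\<close> by blast
qed

lemma half_shift_residue_unique:
  fixes D h :: nat
  assumes "even D" "[h = D div 2] (mod D)" "a \<le> 1" "a' \<le> 1" "k < D div 2" "k' < D div 2"
    and "[a * h + k = a' * h + k'] (mod D)"
  shows "a = a' \<and> k = k'"
proof -
  have "[a * h + k = a * (D div 2) + k] (mod D)" "[a' * h + k' = a' * (D div 2) + k'] (mod D)"
    using assms(2) by (intro cong_add cong_scalar_left cong_refl; assumption)+
  with assms(7) have "[a * (D div 2) + k = a' * (D div 2) + k'] (mod D)"
    by (metis cong_sym cong_trans)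
  moreover have "a * (D div 2) + k < D" "a' * (D div 2) + k' < D"
    using assms(1,3-6) by (auto simp: le_Suc_eq elim!: evenE)
  ultimately have "a * (D div 2) + k = a' * (D div 2) + k'"
    using cong_less_modulus_unique_nat by blast
  then show ?thesis using assms(3-6) by (auto simp: le_Suc_eq)
qed

lemma power_dvd_power_mult_iff:
  fixes L w :: int
  assumes "L \<noteq> 0" "\<not> L dvd w"
  shows "L ^ a dvd L ^ b * w \<longleftrightarrow> a \<le> b"
proof
  assume dvd: "L ^ a dvd L ^ b * w"
  show "a \<le> b"
  proof (rule ccontr)
    assume "\<not> a \<le> b"
    then have "L ^ b * L ^ (a - b) dvd L ^ b * w"
      using dvd by (simp add: power_add[symmetric])
    then have "L ^ (a - b) dvd w" using assms(1) by simp
    moreover have "L dvd L ^ (a - b)" using \<open>\<not> a \<le> b\<close> by simp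
    ultimately show False using assms(2) dvd_trans by blast
  qed
qed (simp add: le_imp_power_dvd)

lemma power_mult_cong_cancel:
  fixes L w w' :: int
  assumes "L \<noteq> 0" "\<not> L dvd w" "\<not> L dvd w'" "r \<le> m" "r' \<le> m"
    and "[L ^ (m - r) * w = L ^ (m - r') * w'] (mod L ^ m)"
  shows "r = r' \<and> [w = w'] (mod L ^ r)"
proof -
  have le: "r' \<le> r"
    if "r' \<le> m" "\<not> L dvd w'" "[L ^ (m - r) * w = L ^ (m - r') * w'] (mod L ^ m)"
    for r r' :: nat and w w' :: int
  proof -
    have "L ^ (m - r) dvd L ^ m" by (simp add: le_imp_power_dvd)
    then have "L ^ (m - r) dvd L ^ (m - r) * w - L ^ (m - r') * w'"
      using that(3) cong_iff_dvd_diff dvd_trans by blast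
    then have "L ^ (m - r) dvd L ^ (m - r) * w - (L ^ (m - r) * w - L ^ (m - r') * w')"
      using dvd_diff dvd_triv_left by blast
    then have "L ^ (m - r) dvd L ^ (m - r') * w'" by simp
    then have "m - r \<le> m - r'" using power_dvd_power_mult_iff[OF assms(1) that(2)] by blast
    with that(1) show ?thesis by linarith
  qed
  have "r' \<le> r" using le[where r = r and r' = r' and w = w and w' = w'] assms(3,5,6) by blast
  moreover have "r \<le> r'"
    using le[where r = r' and r' = r and w = w' and w' = w] assms(2,4,6) cong_sym by blast
  ultimately have "r = r'" by simp
  moreover have "L ^ (m - r) * L ^ r dvd L ^ (m - r) * (w - w')"
    using assms(4,6) \<open>r = r'\<close> by (simp add: cong_iff_dvd_diff right_diff_distrib power_add[symmetric])
  ultimately show ?thesis using assms(1) by (simp add: cong_iff_dvd_diff)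
qed

lemma less_power_decompose:
  fixes l t :: nat
  assumes "1 < l" "0 < t" "t < l ^ m"
  obtains r w where "0 < r" "r \<le> m" "\<not> l dvd w" "t = l ^ (m - r) * w"
proof -
  obtain w where w: "t = l ^ multiplicity l t * w" "\<not> l dvd w"
    using multiplicity_decompose'[of t l] assms(1,2) by auto
  have "0 < w" using w assms(2) by (cases w) auto
  then have "l ^ multiplicity l t \<le> t" by (subst w(1)) simp
  also have "t < l ^ m" by (rule assms(3))
  finally have "multiplicity l t < m" using assms(1) by simp
  then show ?thesis using that[of "m - multiplicity l t" w] w by simp
qed

lemma residue_primroot_pow_surj:
  assumes "n > 1" "residue_primroot n g" "coprime x n"
  obtains i where "i < totient n" "[g ^ i = x] (mod n)"
proof -
  have "x mod n \<in> totatives n"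
    using assms by (auto simp: in_totatives_iff intro!: Nat.gr0I)
  with residue_primroot_is_generator[OF assms(1,2)]
  obtain i where "i < totient n" "g ^ i mod n = x mod n"
    unfolding bij_betw_def by (metis (no_types, lifting) imageE lessThan_iff)
  with that show ?thesis by (auto simp: cong_def)
qed

lemma residue_primroot_pow_half_totient:
  assumes "n > 2" "residue_primroot n g"
  shows "[int g ^ (totient n div 2) = -1] (mod int n)"
proof -
  have "1 < n" "coprime (n - 1) n" using assms(1) coprime_diff_one_left_nat[of n] by simp_all
  then obtain i where i: "i < totient n" "[g ^ i = n - 1] (mod n)"
    using residue_primroot_pow_surj assms(2) by blast
  have "[int g ^ i = int (n - 1)] (mod int n)"
    using i(2) by (metis cong_int_iff of_nat_power)
  moreover have "[int (n - 1) = -1] (mod int n)"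
    using assms(1) by (simp add: cong_iff_dvd_diff)
  ultimately have neg: "[int g ^ i = -1] (mod int n)" by (rule cong_trans)
  have "i \<noteq> 0"
  proof
    assume "i = 0"
    with neg have "int n dvd 2" by (simp add: cong_iff_dvd_diff)
    with assms(1) show False by (auto dest: zdvd_imp_le)
  qed
  have "[(int g ^ i) ^ 2 = (-1) ^ 2] (mod int n)" using neg cong_pow by blast
  then have "[int (g ^ (2 * i)) = int 1] (mod int n)"
    by (simp add: power_mult[symmetric] mult.commute)
  then have "[g ^ (2 * i) = 1] (mod n)" by (simp only: cong_int_iff)
  then have "totient n dvd 2 * i"
    using assms(2) by (simp add: ord_divides' residue_primroot_def)
  then obtain c where c: "2 * i = totient n * c" ..
  with i(1) have "totient n * c < totient n * 2" by linarith
  then have "c < 2" by (simp only: mult_less_cancel1)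
  with c \<open>i \<noteq> 0\<close> have "totient n div 2 = i" by (cases c) auto
  with neg show ?thesis by simp
qed

lemma residue_primroot_power_le:
  assumes "1 < l" "residue_primroot (l ^ m) g" "0 < r" "r \<le> m"
  shows "residue_primroot (l ^ r) g"
proof -
  have lr: "1 < l ^ r" "1 < l ^ m"
    using assms(1,3,4) one_less_power[of l r] one_less_power[of l m] by auto
  have "coprime (l ^ m) g" using assms(2) by (simp add: residue_primroot_def)
  then have cg: "coprime (l ^ r) g" using assms(3,4) by simp
  have "totatives (l ^ r) \<subseteq> (\<lambda>i. g ^ i mod l ^ r) ` {..<ord (l ^ r) g}"
  proof
    fix x assume x: "x \<in> totatives (l ^ r)"
    then have "coprime x (l ^ m)" using assms(3) by (auto simp: in_totatives_iff)
    then obtain i where "[g ^ i = x] (mod l ^ m)"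
      using residue_primroot_pow_surj[OF lr(2) assms(2)] by blast
    then have "[g ^ i = x] (mod l ^ r)"
      using assms(4) cong_dvd_modulus_nat le_imp_power_dvd by blast
    moreover have "[g ^ (i mod ord (l ^ r) g) = g ^ i] (mod l ^ r)"
      using order_divides_expdiff[OF cg] by (simp add: cong_def)
    moreover have "x < l ^ r"
      using x lr(1) by (auto simp: in_totatives_iff order.order_iff_strict)
    ultimately have "g ^ (i mod ord (l ^ r) g) mod l ^ r = x"
      by (metis cong_def mod_less)
    moreover have "i mod ord (l ^ r) g < ord (l ^ r) g" using cg by simp
    ultimately show "x \<in> (\<lambda>i. g ^ i mod l ^ r) ` {..<ord (l ^ r) g}" by force
  qed
  then have "totient (l ^ r) \<le> ord (l ^ r) g"
    unfolding totient_def by (metis card_image_le card_lessThan card_mono finite_imageI finite_lessThan le_trans)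
  moreover have "ord (l ^ r) g \<le> totient (l ^ r)"
    using order_divides_totient[OF cg] assms(1) by (intro dvd_imp_le) auto
  ultimately show ?thesis using cg assms(1) by (simp add: residue_primroot_def)
qed

lemma q_power_not_cong_neg_one:
  assumes "odd l" "1 < l" "odd (ord l q)" "0 < r"
  shows "\<not> [int q ^ j = -1] (mod int (l ^ r))"
proof
  assume "[int q ^ j = -1] (mod int (l ^ r))"
  then have neg: "[int q ^ j = -1] (mod int l)"
    using assms(4) cong_dvd_modulus by (metis dvd_power of_nat_dvd_iff)
  then have "[(int q ^ j) ^ 2 = (-1) ^ 2] (mod int l)" by (rule cong_pow)
  then have "[int (q ^ (2 * j)) = int 1] (mod int l)"
    by (simp add: power_mult[symmetric] mult.commute)
  then have "ord l q dvd 2 * j" by (simp only: cong_int_iff ord_divides)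
  then have "ord l q dvd j" using assms(3) by (simp add: coprime_dvd_mult_right_iff)
  then have "[int (q ^ j) = int 1] (mod int l)" by (simp only: cong_int_iff ord_divides)
  with neg have "[1 = -1] (mod int l)" by (metis cong_sym cong_trans of_nat_1 of_nat_power)
  then have "l dvd 2" by (simp add: cong_iff_dvd_diff) presburger
  then have "l \<le> 2" by (rule dvd_imp_le) simp
  with assms(1,2) have "l = 2" by simp
  with assms(1) show False by simp
qed

lemma sign_iff_neg_one_power: "s \<in> {1, -1::int} \<longleftrightarrow> (\<exists>a::nat. a \<le> 1 \<and> s = (-1) ^ a)"
proof
  assume "s \<in> {1, -1}"
  then show "\<exists>a::nat. a \<le> 1 \<and> s = (-1) ^ a"
    by (metis insertE power_0 power_one_right singletonD zero_le_one order_refl)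
qed (auto simp: le_Suc_eq)

locale neg_one_not_q_power =
  fixes n q g :: nat
  assumes modulus_gt_2: "2 < n"
    and primroot: "residue_primroot n g"
    and coprime_modulus_q: "coprime n q"
    and q_power_neq_neg_one: "\<not> [int q ^ j = -1] (mod int n)"
begin

abbreviation q_index :: nat where "q_index \<equiv> totient n div ord n q"

lemma modulus_gt_1: "1 < n" using modulus_gt_2 by simp

lemma coprime_modulus_g: "coprime n g" and ord_g: "ord n g = totient n"
  using primroot by (auto simp: residue_primroot_def)

lemma g_pow_cong_iff: "[g ^ a = g ^ b] (mod n) \<longleftrightarrow> [a = b] (mod totient n)"
  using order_divides_expdiff[OF coprime_modulus_g] ord_g by simp

lemma totient_eq_q_index_mult_ord: "totient n = q_index * ord n q"
  using order_divides_totient[OF coprime_modulus_q] by simp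

lemma g_pow_in_q_powers_iff: "(\<exists>j. [g ^ x = q ^ j] (mod n)) \<longleftrightarrow> q_index dvd x"
proof -
  obtain e where e: "[g ^ e = q] (mod n)"
    using residue_primroot_pow_surj[OF modulus_gt_1 primroot] coprime_modulus_q
    by (metis coprime_commute)
  have "ord n q = totient n div gcd e (totient n)"
    using ord_cong[OF e] ord_power[OF coprime_modulus_g] ord_g by simp
  then have index: "q_index = gcd e (totient n)"
    using modulus_gt_2 by (simp add: div_div_eq_right)
  have "[g ^ x = q ^ j] (mod n) \<longleftrightarrow> [e * j = x] (mod totient n)" for j
  proof -
    have "[q ^ j = g ^ (e * j)] (mod n)"
      using cong_pow[OF e, of j] by (simp add: power_mult cong_sym)
    then have "[g ^ x = q ^ j] (mod n) \<longleftrightarrow> [g ^ x = g ^ (e * j)] (mod n)"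
      by (meson cong_sym cong_trans)
    then show ?thesis by (simp add: g_pow_cong_iff cong_sym_eq)
  qed
  then show ?thesis by (simp add: index cong_mult_solvable_iff)
qed

lemma half_totient_cong_half_q_index:
  "even q_index \<and> [totient n div 2 = q_index div 2] (mod q_index)"
proof -
  define h D L where "h = totient n div 2" and "D = q_index" and "L = ord n q"
  have h: "2 * h = totient n"
    using totient_even[OF modulus_gt_2] by (simp add: h_def)
  have tot: "totient n = D * L"
    unfolding D_def L_def by (rule totient_eq_q_index_mult_ord)
  have "\<not> D dvd h"
  proof
    assume "D dvd h"
    then obtain j where "[g ^ h = q ^ j] (mod n)" using g_pow_in_q_powers_iff D_def by blast
    then have "[int q ^ j = int g ^ h] (mod int n)"
      by (metis cong_int_iff cong_sym of_nat_power)
    with residue_primroot_pow_half_totient[OF modulus_gt_2 primroot] q_power_neq_neg_one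
    show False by (metis cong_trans h_def)
  qed
  have "odd L"
  proof
    assume "even L"
    then obtain b where "L = 2 * b" ..
    with h tot have "h = D * b" by simp
    with \<open>\<not> D dvd h\<close> show False by simp
  qed
  then obtain c where c: "L = 2 * c + 1" by (rule oddE)
  have "even D" using h tot \<open>odd L\<close> by (metis dvd_triv_left even_mult_iff)
  then obtain d where d: "D = 2 * d" ..
  have "h = D * c + D div 2" using h tot c d by (simp add: algebra_simps)
  then show ?thesis using \<open>even D\<close> by (simp add: h_def D_def cong_def)
qed

lemma neg_one_power_g_pow:
  "[(-1) ^ a * int g ^ k = int g ^ (a * (totient n div 2) + k)] (mod int n)"
proof -
  have "[(int g ^ (totient n div 2)) ^ a = (-1) ^ a] (mod int n)"
    using cong_pow[OF residue_primroot_pow_half_totient[OF modulus_gt_2 primroot]] .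
  then have "[(int g ^ (totient n div 2)) ^ a * int g ^ k = (-1) ^ a * int g ^ k] (mod int n)"
    by (rule cong_scalar_right)
  moreover have "(int g ^ (totient n div 2)) ^ a * int g ^ k = int g ^ (a * (totient n div 2) + k)"
    by (simp add: power_add mult.commute[of a] power_mult)
  ultimately show ?thesis by (simp add: cong_sym_eq)
qed

lemma q_index_pos: "0 < q_index"
proof -
  have "totient n \<noteq> 0" using modulus_gt_2 by simp
  then show ?thesis using totient_eq_q_index_mult_ord by (metis gr0I mult_0)
qed

lemma g_pow_decomposition:
  obtains a k j where "a \<le> 1" "k < q_index div 2"
    "[g ^ x = g ^ (a * (totient n div 2) + k) * q ^ j] (mod n)"
proof -
  define h where "h = totient n div 2"
  obtain a k where ak: "a \<le> 1" "k < q_index div 2" "[a * h + k = x + totient n] (mod q_index)"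
    using half_shift_residue_exists[OF _ q_index_pos] half_totient_cong_half_q_index
    unfolding h_def by blast
  have "q_index \<le> totient n"
    using totient_eq_q_index_mult_ord coprime_modulus_q by (simp add: Suc_leI)
  then have "q_index div 2 \<le> h" "2 * h \<le> totient n" by (simp_all add: h_def div_le_mono)
  then have le: "a * h + k \<le> x + totient n"
    using ak(1,2) by (auto simp: le_Suc_eq)
  then have "q_index dvd x + totient n - (a * h + k)"
    using ak(3) cong_altdef_nat cong_sym by blast
  then obtain j where j: "[g ^ (x + totient n - (a * h + k)) = q ^ j] (mod n)"
    using g_pow_in_q_powers_iff by blast
  have "[g ^ x = g ^ (x + totient n)] (mod n)" unfolding g_pow_cong_iff by (simp add: cong_def)
  also have "g ^ (x + totient n) = g ^ (a * h + k) * g ^ (x + totient n - (a * h + k))"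
    using le by (simp add: power_add[symmetric])
  also have "[\<dots> = g ^ (a * h + k) * q ^ j] (mod n)" using j by (rule cong_scalar_left)
  finally show ?thesis using that ak(1,2) unfolding h_def by blast
qed

lemma int_unit_eq_g_pow:
  assumes "coprime u (int n)"
  obtains x where "[int g ^ x = u] (mod int n)"
proof -
  have u_mod: "int (nat (u mod int n)) = u mod int n" using modulus_gt_2 by simp
  have "coprime (int (nat (u mod int n))) (int n)"
    using assms modulus_gt_2 by (simp only: u_mod coprime_mod_left_iff)
  then have "coprime (nat (u mod int n)) n" by (simp only: coprime_int_iff)
  then obtain x where "[g ^ x = nat (u mod int n)] (mod n)"
    using residue_primroot_pow_surj[OF modulus_gt_1 primroot] by blast
  then have "[int (g ^ x) = int (nat (u mod int n))] (mod int n)" by (simp only: cong_int_iff)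
  then have "[int g ^ x = u] (mod int n)" by (simp only: u_mod of_nat_power cong_mod_right)
  then show ?thesis by (rule that)
qed

lemma unit_decomposition:
  assumes "coprime u (int n)"
  obtains s k j where "s \<in> {1, -1}" "k < q_index div 2" "[u = s * int g ^ k * int q ^ j] (mod int n)"
proof -
  define h where "h = totient n div 2"
  obtain x where x: "[int g ^ x = u] (mod int n)" using assms by (rule int_unit_eq_g_pow)
  obtain a k j where akj: "a \<le> 1" "k < q_index div 2" "[g ^ x = g ^ (a * h + k) * q ^ j] (mod n)"
    unfolding h_def by (rule g_pow_decomposition)
  have "[u = int g ^ x] (mod int n)" using x by (rule cong_sym)
  also have "[int g ^ x = int g ^ (a * h + k) * int q ^ j] (mod int n)"
    using akj(3) by (metis cong_int_iff of_nat_mult of_nat_power)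
  also have "[int g ^ (a * h + k) * int q ^ j = (-1) ^ a * int g ^ k * int q ^ j] (mod int n)"
    using neg_one_power_g_pow cong_scalar_right cong_sym unfolding h_def by blast
  finally show ?thesis using that akj(1,2) sign_iff_neg_one_power by blast
qed

lemma unit_decomposition_unique:
  assumes "s \<in> {1, -1}" "s' \<in> {1, -1}" "k < q_index div 2" "k' < q_index div 2"
    and "[s * int g ^ k = s' * int g ^ k' * int q ^ j] (mod int n)"
  shows "s = s' \<and> k = k'"
proof -
  define h where "h = totient n div 2"
  obtain a a' :: nat where a: "a \<le> 1" "s = (-1) ^ a" and a': "a' \<le> 1" "s' = (-1) ^ a'"
    using assms(1,2) sign_iff_neg_one_power by meson
  have "coprime (q ^ j) n" using coprime_modulus_q by (simp add: coprime_commute)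
  then obtain y where y: "[g ^ y = q ^ j] (mod n)"
    using residue_primroot_pow_surj[OF modulus_gt_1 primroot] by blast
  then have "q_index dvd y" using g_pow_in_q_powers_iff by blast
  have "[int g ^ (a * h + k) = int g ^ (a' * h + k') * int g ^ y] (mod int n)"
  proof -
    have "[int g ^ (a * h + k) = s * int g ^ k] (mod int n)"
      using neg_one_power_g_pow a(2) unfolding h_def by (simp add: cong_sym_eq)
    moreover have "[s' * int g ^ k' * int q ^ j = int g ^ (a' * h + k') * int g ^ y] (mod int n)"
      using neg_one_power_g_pow[of a' k'] y a'(2) unfolding h_def
      by (metis cong_int_iff cong_mult cong_sym of_nat_power)
    ultimately show ?thesis using assms(5) by (metis cong_trans)
  qed
  then have "[g ^ (a * h + k) = g ^ (a' * h + k' + y)] (mod n)"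
    by (metis cong_int_iff of_nat_power power_add)
  then have "[a * h + k = a' * h + k' + y] (mod q_index)"
    using g_pow_cong_iff cong_dvd_modulus_nat totient_eq_q_index_mult_ord by (metis dvd_triv_left)
  moreover have "[a' * h + k' + y = a' * h + k'] (mod q_index)"
    using \<open>q_index dvd y\<close> by (metis cong_def mod_add_right_eq dvd_imp_mod_0 add_0_right)
  ultimately have "[a * h + k = a' * h + k'] (mod q_index)" by (rule cong_trans)
  then have "a = a' \<and> k = k'"
    using half_shift_residue_unique half_totient_cong_half_q_index a(1) a'(1) assms(3,4)
    unfolding h_def by blast
  then show ?thesis using a(2) a'(2) by simp
qed

end

locale odd_order_prime_power =
  fixes q l m g :: nat
  assumes prime_l: "prime l" and odd_l: "odd l" and coprime_l_q: "coprime l q"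
    and odd_ord: "odd (ord l q)" and m_pos: "0 < m" and primroot: "residue_primroot (l ^ m) g"
begin

definition reps :: "(nat \<times> nat \<times> int) set" where
  "reps = {(r, k, s). 0 < r \<and> r \<le> m \<and> k < dlt q l r div 2 \<and> s \<in> {1, -1}}"

definition rep_coset :: "nat \<times> nat \<times> int \<Rightarrow> int set" where
  "rep_coset = (\<lambda>(r, k, s). cyc_coset q (l ^ m) (s * int (l ^ (m - r)) * int g ^ k))"

lemma l_gt_1: "1 < l" using prime_l by (rule prime_gt_1_nat)

lemma coprime_l_g: "coprime l g"
  using primroot m_pos by (simp add: residue_primroot_def)

lemma neg_one_not_q_power_prime_power:
  assumes "0 < r" "r \<le> m"
  shows "neg_one_not_q_power (l ^ r) q g"
proof
  have "3 \<le> l" using odd_l l_gt_1 by presburger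
  also have "l \<le> l ^ r" using assms(1) l_gt_1 by (simp add: self_le_power)
  finally show "2 < l ^ r" by simp
  show "residue_primroot (l ^ r) g"
    using residue_primroot_power_le[OF l_gt_1 primroot assms] .
  show "coprime (l ^ r) q" using coprime_l_q by simp
  show "\<not> [int q ^ j = - 1] (mod int (l ^ r))" for j
    using q_power_not_cong_neg_one[OF odd_l l_gt_1 odd_ord assms(1)] .
qed

lemma q_index_mod_power: "totient (l ^ r) div ord (l ^ r) q = dlt q l r"
  by (simp add: dlt_def lam_def)

lemma unit_not_dvd:
  assumes "s \<in> {1, -1}"
  shows "\<not> int l dvd s * int g ^ k * int q ^ j"
proof
  assume "int l dvd s * int g ^ k * int q ^ j"
  moreover have "coprime (int l) (s * int g ^ k * int q ^ j)"
    using assms coprime_l_g coprime_l_q by auto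
  ultimately have "is_unit (int l)" by (meson coprime_common_divisor dvd_refl)
  with l_gt_1 show False by simp
qed

lemma rep_coset_neq_zero:
  assumes "x \<in> reps"
  shows "rep_coset x \<noteq> {0}"
proof -
  obtain r k s where x: "x = (r, k, s)" "0 < r" "r \<le> m" "s \<in> {1, -1}"
    using assms by (auto simp: reps_def)
  have "int l \<noteq> 0" using l_gt_1 by simp
  from power_dvd_power_mult_iff[OF this unit_not_dvd[OF x(4), of k 0], of m "m - r"] x(2,3)
  have "\<not> int l ^ m dvd int l ^ (m - r) * (s * int g ^ k * int q ^ 0)" by simp
  then show ?thesis
    using x(1) by (simp add: rep_coset_def cyc_coset_eq_zero_iff ac_simps)
qed

lemma inj_on_rep_coset: "inj_on rep_coset reps"
proof (rule inj_onI)
  fix x x' assume "x \<in> reps" "x' \<in> reps" and eq: "rep_coset x = rep_coset x'"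
  then obtain r k s r' k' s' where x: "x = (r, k, s)" "0 < r" "r \<le> m" "k < dlt q l r div 2" "s \<in> {1, -1}"
    and x': "x' = (r', k', s')" "0 < r'" "r' \<le> m" "k' < dlt q l r' div 2" "s' \<in> {1, -1}"
    by (auto simp: reps_def)
  obtain j where "[s' * int (l ^ (m - r')) * int g ^ k' = s * int (l ^ (m - r)) * int g ^ k * int q ^ j] (mod int (l ^ m))"
    using eq x(1) x'(1) cyc_coset_eq_iff[of "l ^ m" q] coprime_l_q by (auto simp: rep_coset_def)
  then have "[int l ^ (m - r) * (s * int g ^ k * int q ^ j) = int l ^ (m - r') * (s' * int g ^ k' * int q ^ 0)] (mod int l ^ m)"
    by (simp add: ac_simps cong_sym_eq)
  from power_mult_cong_cancel[OF _ unit_not_dvd[OF x(5)] unit_not_dvd[OF x'(5)] x(3) x'(3) this]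
  have "r = r'" and "[s * int g ^ k * int q ^ j = s' * int g ^ k' * int q ^ 0] (mod int l ^ r)"
    using l_gt_1 by auto
  then have "[s' * int g ^ k' = s * int g ^ k * int q ^ j] (mod int (l ^ r))"
    by (simp add: cong_sym_eq)
  moreover interpret neg_one_not_q_power "l ^ r" q g
    using neg_one_not_q_power_prime_power[OF x(2,3)] .
  have "k < totient (l ^ r) div ord (l ^ r) q div 2" "k' < totient (l ^ r) div ord (l ^ r) q div 2"
    using x(4) x'(4) \<open>r = r'\<close> by (simp_all add: q_index_mod_power)
  ultimately have "s' = s \<and> k' = k" using unit_decomposition_unique x(5) x'(5) by blast
  with \<open>r = r'\<close> x(1) x'(1) show "x = x'" by simp
qed

lemma cyc_coset_nonzero_eq_rep_coset:
  assumes "0 < t" "t < int (l ^ m)"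
  obtains x where "x \<in> reps" "cyc_coset q (l ^ m) t = rep_coset x"
proof -
  have "0 < nat t" "nat t < l ^ m" using assms by (simp_all add: nat_less_iff)
  then obtain r w where r: "0 < r" "r \<le> m" and w: "\<not> l dvd w" "nat t = l ^ (m - r) * w"
    by (rule less_power_decompose[OF l_gt_1])
  interpret neg_one_not_q_power "l ^ r" q g
    using neg_one_not_q_power_prime_power[OF r(1,2)] .
  have "coprime (int w) (int (l ^ r))"
    using w(1) prime_l by (simp add: prime_imp_coprime coprime_commute)
  then obtain s k j where skj: "s \<in> {1, -1}" "k < totient (l ^ r) div ord (l ^ r) q div 2"
    "[int w = s * int g ^ k * int q ^ j] (mod int (l ^ r))"
    by (rule unit_decomposition)
  have "[int (l ^ (m - r)) * int w = int (l ^ (m - r)) * (s * int g ^ k * int q ^ j)] (mod int (l ^ (m - r)) * int (l ^ r))"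
    using skj(3) by (rule cong_cmult_leftI)
  moreover have "int (l ^ (m - r)) * int (l ^ r) = int (l ^ m)"
    using r(2) by (simp add: power_add[symmetric])
  moreover have "int (l ^ (m - r)) * int w = t"
    using w(2) assms(1) by (metis int_nat_eq order.strict_implies_order of_nat_mult)
  ultimately have "[t = s * int (l ^ (m - r)) * int g ^ k * int q ^ j] (mod int (l ^ m))"
    by (simp add: ac_simps)
  then have "rep_coset (r, k, s) = cyc_coset q (l ^ m) t"
    using cyc_coset_eq_iff[of "l ^ m" q] coprime_l_q by (auto simp: rep_coset_def)
  moreover have "(r, k, s) \<in> reps" using r skj(1,2) by (simp add: reps_def q_index_mod_power)
  ultimately show ?thesis using that by metis
qed

lemma cyc_cosets_eq_rep_cosets:
  "{cyc_coset q (l ^ m) t | t. t \<in> {0..<int (l ^ m)}} = insert {0} (rep_coset ` reps)"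
proof (intro equalityI subsetI)
  fix Y assume "Y \<in> {cyc_coset q (l ^ m) t | t. t \<in> {0..<int (l ^ m)}}"
  then obtain t where t: "Y = cyc_coset q (l ^ m) t" "0 \<le> t" "t < int (l ^ m)" by auto
  show "Y \<in> insert {0} (rep_coset ` reps)"
  proof (cases "t = 0")
    case True
    then show ?thesis using t(1) cyc_coset_eq_zero_iff[of q "l ^ m" 0] by simp
  next
    case False
    with t(2) have "0 < t" by simp
    then obtain x where "x \<in> reps" "cyc_coset q (l ^ m) t = rep_coset x"
      using t(3) by (rule cyc_coset_nonzero_eq_rep_coset)
    then show ?thesis using t(1) by blast
  qed
next
  have range: "t mod int (l ^ m) \<in> {0..<int (l ^ m)}" for t using l_gt_1 by simp
  fix Y assume "Y \<in> insert {0} (rep_coset ` reps)"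
  then consider "Y = {0}" | x where "Y = rep_coset x" by blast
  then show "Y \<in> {cyc_coset q (l ^ m) t | t. t \<in> {0..<int (l ^ m)}}"
  proof cases
    case 1
    then have "Y = cyc_coset q (l ^ m) (0 mod int (l ^ m))"
      using cyc_coset_eq_zero_iff[of q "l ^ m" 0] by simp
    then show ?thesis using range by blast
  next
    case (2 x)
    obtain r k s where "x = (r, k, s)" by (cases x)
    then have "Y = cyc_coset q (l ^ m) (s * int (l ^ (m - r)) * int g ^ k)"
      using 2 by (simp add: rep_coset_def)
    then have "Y = cyc_coset q (l ^ m) ((s * int (l ^ (m - r)) * int g ^ k) mod int (l ^ m))"
      by (simp only: cyc_coset_mod)
    then show ?thesis using range by blast
  qed
qed

end

theorem lemma4p3:
  fixes q l m g :: nat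
  assumes "primepow q"
    and "prime l" and "odd l" and "coprime l q"
    and "m > 0"
    and "odd (ord l q)"
    and "residue_primroot (l ^ m) g"
  defines "Idx \<equiv> {(r, k, s). 1 \<le> r \<and> r \<le> m \<and> k + 1 \<le> dlt q l r div 2 \<and> s \<in> {1::int, -1}}"
    and "F \<equiv> (\<lambda>x. case x of None \<Rightarrow> {0::int}
                  | Some (r, k, s) \<Rightarrow> listed_set q l m g s r k)"
  shows "cyc_coset q (l ^ m) 0 = {0}
     \<and> (\<forall>(r, k, s) \<in> Idx.
          listed_set q l m g s r k = cyc_coset q (l ^ m) (s * int (l ^ (m - r)) * int g ^ k))
     \<and> inj_on F (insert None (Some ` Idx))
     \<and> F ` (insert None (Some ` Idx)) = {cyc_coset q (l ^ m) t | t. t \<in> {0..<int (l ^ m)}}"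
proof -
  interpret odd_order_prime_power q l m g
    using assms(2-7) by unfold_locales
  have Idx: "Idx = reps" by (auto simp: Idx_def reps_def)
  have listed: "\<forall>(r, k, s) \<in> Idx.
      listed_set q l m g s r k = cyc_coset q (l ^ m) (s * int (l ^ (m - r)) * int g ^ k)"
    using listed_set_eq_cyc_coset[OF coprime_l_q] by (auto simp: Idx_def)
  then have F_Some: "F (Some x) = rep_coset x" if "x \<in> Idx" for x
    using that by (auto simp: F_def rep_coset_def)
  have F_None: "F None = {0}" by (simp add: F_def)
  have "inj_on (F \<circ> Some) Idx \<longleftrightarrow> inj_on rep_coset Idx"
    by (rule inj_on_cong) (simp add: F_Some)
  then have "inj_on F (Some ` Idx)"
    using inj_on_rep_coset Idx by (simp add: inj_on_imageI)
  moreover have "F None \<notin> F ` Some ` Idx"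
  proof
    assume "F None \<in> F ` Some ` Idx"
    then obtain x where "x \<in> Idx" "F (Some x) = {0}" using F_None by auto
    with F_Some rep_coset_neq_zero Idx show False by metis
  qed
  ultimately have "inj_on F (insert None (Some ` Idx))" by (simp add: inj_on_insert)
  moreover have "F ` Some ` Idx = rep_coset ` reps"
    unfolding image_image Idx[symmetric] using F_Some by (rule image_cong[OF refl])
  ultimately show ?thesis
    using listed F_None cyc_coset_eq_zero_iff[of q "l ^ m" 0] cyc_cosets_eq_rep_cosets by simp
qed

end
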